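(* Assume the setup described in the context, with $\lambda_d$ defined as there. Then $|\lambda_d|\ll(\log X)^{k/2}$ for all $d$.
   Context: Let $X$ be sufficiently large and $k\le(\log X)^{1/5}$. Let $p_0\in[(\log\log X)/2,X]$ be a prime such that for every $\epsilon>0$, $\sum_{q<X^{1/2-\epsilon},(q,p_0)=1}\sup_{(a,q)=1,\,x'\le X}|\pi(x';q,a)-\pi(x')/\phi(q)|\ll_\epsilon X\exp(-c_0\sqrt{\log X})$ for an absolute $c_0>0$. Let $\mathcal{L}=\{L_1,\dots,L_k\}$ be distinct linear functions $L_i(n)=a_in+b_i$ with integer coefficients $0<a_i\le(\log X)^{1/3}$, $\gcd(2p_0,a_i)=1$, $0<b_i<X$, which are $\langle P_3\rangle$-admissible: for every prime $p\equiv3\pmod4$ there is $n_p$ with $p\nmid\prod_iL_i(n_p)$. Let $\langle P_3\rangle$ be the set of positive integers all of whose prime factors are $\equiv3\pmod4$. Let $W=\prod_{p\le2(\log X)^{1/3},\,p\equiv3\ (4),\,p\ne p_0}p$. For primes $p$ let $\nu(p)=\#\{1\le n<p:\prod_{i=1}^kL_i(n)\equiv0\pmod p\}$. For $r\ge1$ let $y_r=\mu(r)^2$ if $r\in\langle P_3\rangle$, $\gcd(r,Wp_0)=1$ and $r<X^{1/10}$, and $y_r=0$ otherwise. For $d$ with $\gcd(d,p_0W)=1$ let $\lambda_d=\mu(d)\bigl(\prod_{p\mid d}\frac{p}{\nu(p)}\bigr)\sum_{r:\,d\mid r}y_r\prod_{p\mid r}\frac{\nu(p)}{p-\nu(p)}$,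 and $\lambda_d=0$ otherwise. *)

theory Defs
  imports "HOL-Analysis.Analysis" "HOL-Number_Theory.Number_Theory"
    "HOL-Computational_Algebra.Squarefree"
begin

definition moeb :: "nat \<Rightarrow> int" where
  "moeb n = (if n > 0 \<and> squarefree n then (-1) ^ card (prime_factors n) else 0)"

definition prime_pi :: "real \<Rightarrow> nat" where
  "prime_pi x = card {p::nat. prime p \<and> real p \<le> x}"

definition prime_pi_ap :: "real \<Rightarrow> nat \<Rightarrow> nat \<Rightarrow> nat" where
  "prime_pi_ap x q a = card {p::nat. prime p \<and> real p \<le> x \<and> [p = a] (mod q)}"

definition P3 :: "nat set" where
  "P3 = {n. n > 0 \<and> (\<forall>p\<in>prime_factors n. p mod 4 = 3)}"

definition prodL :: "nat \<Rightarrow> (nat \<Rightarrow> int) \<Rightarrow> (nat \<Rightarrow> int) \<Rightarrow> int \<Rightarrow> int" where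
  "prodL k a b n = (\<Prod>i<k. a i * n + b i)"

definition nuL :: "nat \<Rightarrow> (nat \<Rightarrow> int) \<Rightarrow> (nat \<Rightarrow> int) \<Rightarrow> nat \<Rightarrow> nat" where
  "nuL k a b p = card {n::nat. 1 \<le> n \<and> n < p \<and> int p dvd prodL k a b (int n)}"

definition Wprod :: "real \<Rightarrow> nat \<Rightarrow> nat" where
  "Wprod X p0 = (\<Prod>p\<in>{p::nat. prime p \<and> real p \<le> 2 * ln X powr (1/3) \<and> p mod 4 = 3 \<and> p \<noteq> p0}. p)"

definition yr :: "real \<Rightarrow> nat \<Rightarrow> nat \<Rightarrow> real" where
  "yr X p0 r = (if r \<in> P3 \<and> squarefree r \<and> coprime r (Wprod X p0 * p0) \<and> real r < X powr (1/10)
                then 1 else 0)"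

definition lambdaL :: "real \<Rightarrow> nat \<Rightarrow> nat \<Rightarrow> (nat \<Rightarrow> int) \<Rightarrow> (nat \<Rightarrow> int) \<Rightarrow> nat \<Rightarrow> real" where
  "lambdaL X p0 k a b d =
     (if coprime d (p0 * Wprod X p0) then
        real_of_int (moeb d) * (\<Prod>p\<in>prime_factors d. real p / real (nuL k a b p)) *
        (\<Sum>r\<in>{r::nat. 0 < r \<and> d dvd r \<and> real r < X powr (1/10)}.
            yr X p0 r * (\<Prod>p\<in>prime_factors r. real (nuL k a b p) / (real p - real (nuL k a b p))))
      else 0)"

end

(*
  Let S be the set of primes p = 3 (mod 4) below X^(1/10) not dividing W p0, and
  g(p) = nu(p) / (p - nu(p)).  The r with y_r = 1 are squarefree products of primes of S, so each is
  determined by its set of prime factors, and summing over all sets between the prime factors of d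
  and S gives |lambda_d| <= prod_(p | d) (p / nu(p)) g(p) * prod_(p in S, p not dividing d) (1 + g(p)),
  which is at most prod_(p in S) p / (p - nu(p)).

  Every p in S exceeds 2 (log X)^(1/3) >= a_i, so nu(p) <= k and p / (p - nu(p)) <= exp (k/p + 2 k^2/p^2).
  Thus log |lambda_d| <= k sum_(p in S) 1/p + k, and the claim follows from the Mertens-type bound
  sum_(A < p <= B, p = 3 mod 4) 1/p <= (log log B - log log A) / 2 + O(1) with A about (log X)^(1/3):
  the saving (log log A) / 2 absorbs all constants once X is large.  This bound is proved
  elementarily: Chebyshev's psi(N) <= 4N gives sum_(n <= N) Lambda(n)/n <= log N + O(1); Dirichlet's
  argument bounds sum_(n <= N) chi_4(n) Lambda(n)/n, because the partial sums of L(1, chi_4) stay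
  above 1/2; (1 - chi_4)/2 selects the primes = 3 (mod 4); partial summation against 1/log n finishes.
*)
theory Submission
  imports Defs
begin

section \<open>Chebyshev and Mertens bounds\<close>

lemma sum_divisors_swap:
  fixes F :: "nat \<Rightarrow> nat \<Rightarrow> real"
  shows "(\<Sum>n=1..N. \<Sum>d | d dvd n. F d (n div d)) = (\<Sum>d=1..N. \<Sum>m=1..N div d. F d m)"
proof -
  have "(\<Sum>n=1..N. \<Sum>d | d dvd n. F d (n div d))
        = (\<Sum>(n, d)\<in>Sigma {1..N} (\<lambda>n. {d. d dvd n}). F d (n div d))"
    by (rule sum.Sigma) (auto intro: finite_divisors_nat)
  also have "\<dots> = (\<Sum>(d, m)\<in>Sigma {1..N} (\<lambda>d. {1..N div d}). F d m)"
    by (rule sum.reindex_bij_witness[where i="\<lambda>(d, m). (d * m, d)" and j="\<lambda>(n, d). (d, n div d)"])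
       (auto simp: less_eq_div_iff_mult_less_eq mult.commute Suc_le_eq,
        (meson dvd_imp_le dvd_pos_nat order_trans)+)
  also have "\<dots> = (\<Sum>d=1..N. \<Sum>m=1..N div d. F d m)"
    by (rule sum.Sigma[symmetric]) auto
  finally show ?thesis .
qed

lemma ln_fact_eq_sum_mangoldt: "ln (fact N :: real) = (\<Sum>d=1..N. mangoldt d * real (N div d))"
proof -
  have "ln (fact N :: real) = (\<Sum>n=1..N. ln (real n))"
    by (simp add: fact_prod, subst ln_prod) auto
  also have "\<dots> = (\<Sum>n=1..N. \<Sum>d | d dvd n. mangoldt d)"
    by (intro sum.cong refl) (simp add: mangoldt_sum)
  also have "\<dots> = (\<Sum>d=1..N. \<Sum>m=1..N div d. mangoldt d)"
    by (rule sum_divisors_swap)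
  finally show ?thesis by (simp add: mult.commute)
qed

definition chebyshev_psi :: "nat \<Rightarrow> real" where
  "chebyshev_psi N = (\<Sum>d=1..N. mangoldt d)"

lemma chebyshev_psi_mono: "M \<le> N \<Longrightarrow> chebyshev_psi M \<le> chebyshev_psi N"
  unfolding chebyshev_psi_def by (intro sum_mono2) (auto intro: mangoldt_nonneg)

lemma sum_mangoldt_le_ln_central_binomial:
  "(\<Sum>d=n+1..2*n. mangoldt d) \<le> ln (real ((2*n) choose n))"
proof -
  have "(\<Sum>d=n+1..2*n. mangoldt d) = (\<Sum>d=1..2*n. if n < d then mangoldt d else 0)"
    by (rule sum.mono_neutral_cong_left) auto
  also have "\<dots> \<le> (\<Sum>d=1..2*n. mangoldt d * (real ((2*n) div d) - 2 * real (n div d)))"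
  proof (rule sum_mono)
    fix d assume d: "d \<in> {1..2*n}"
    have "2 * (n div d) \<le> (2*n) div d"
      using d div_times_less_eq_dividend[of n d] by (simp add: less_eq_div_iff_mult_less_eq)
    moreover have "n < d \<Longrightarrow> 1 \<le> (2*n) div d"
      using d by (simp add: less_eq_div_iff_mult_less_eq)
    ultimately have "(if n < d then 1 else 0) \<le> real ((2*n) div d) - 2 * real (n div d)"
      by auto
    from mult_left_mono[OF this mangoldt_nonneg[of d]]
    show "(if n < d then mangoldt d else 0) \<le> mangoldt d * (real ((2*n) div d) - 2 * real (n div d))"
      by (cases "n < d") simp_all
  qed
  also have "\<dots> = ln (fact (2*n)) - 2 * ln (fact n :: real)"
  proof -
    have "(\<Sum>d=1..n. mangoldt d * real (n div d)) = (\<Sum>d=1..2*n. mangoldt d * real (n div d))"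
      by (rule sum.mono_neutral_left) auto
    then show ?thesis
      unfolding ln_fact_eq_sum_mangoldt
      by (simp add: right_diff_distrib sum_subtractf sum_distrib_left mult.left_commute)
  qed
  also have "\<dots> = ln (real ((2*n) choose n))"
  proof -
    have "real ((2*n) choose n) = fact (2*n) / (fact n * fact n)"
      using binomial_fact[of n "2*n", where 'a=real] by (simp add: mult_2)
    then show ?thesis by (simp add: ln_div ln_mult)
  qed
  finally show ?thesis .
qed

lemma chebyshev_psi_double_le: "chebyshev_psi (2*n) \<le> chebyshev_psi n + 2 * real n"
proof -
  have "chebyshev_psi (2*n) = chebyshev_psi n + (\<Sum>d=n+1..2*n. mangoldt d)"
    unfolding chebyshev_psi_def using sum.ub_add_nat[of 1 n mangoldt n] by (simp add: mult_2)
  moreover have "ln (real ((2*n) choose n)) \<le> ln (2 ^ (2*n))"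
    using binomial_le_pow2[of "2*n" n] by (simp flip: of_nat_le_iff)
  moreover have "ln (2 ^ (2*n) :: real) \<le> 2 * real n"
    using ln_2_less_1 by (simp add: ln_realpow mult_left_le)
  ultimately show ?thesis
    using sum_mangoldt_le_ln_central_binomial[of n] by linarith
qed

lemma chebyshev_psi_le: "chebyshev_psi N \<le> 4 * real N"
proof (induction N rule: less_induct)
  case (less N)
  show ?case
  proof (cases "N \<le> 1")
    case True
    then show ?thesis by (auto simp: chebyshev_psi_def le_Suc_eq)
  next
    case False
    define m where "m = (N + 1) div 2"
    have "m < N" "N \<le> 2 * m" "3 * m \<le> 2 * N" using False unfolding m_def by auto
    have "chebyshev_psi N \<le> chebyshev_psi (2 * m)"
      using \<open>N \<le> 2 * m\<close> by (rule chebyshev_psi_mono)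
    also have "\<dots> \<le> 4 * real m + 2 * real m"
      using chebyshev_psi_double_le[of m] less.IH[OF \<open>m < N\<close>] by linarith
    finally show ?thesis using \<open>3 * m \<le> 2 * N\<close> by linarith
  qed
qed

lemma sum_mangoldt_div_le:
  assumes "1 \<le> N"
  shows "(\<Sum>d=1..N. mangoldt d / real d) \<le> ln (real N) + 4"
proof -
  have "real N * (\<Sum>d=1..N. mangoldt d / real d) - chebyshev_psi N
        = (\<Sum>d=1..N. mangoldt d * (real N / real d - 1))"
    unfolding chebyshev_psi_def by (simp add: sum_distrib_left sum_subtractf algebra_simps)
  also have "\<dots> \<le> (\<Sum>d=1..N. mangoldt d * real (N div d))"
  proof (rule sum_mono)
    fix d assume d: "d \<in> {1..N}"
    have "real N = real (N div d) * real d + real (N mod d)"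
      by (metis div_mult_mod_eq of_nat_add of_nat_mult)
    moreover have "real (N mod d) < real d" using d by simp
    ultimately have "real N / real d - 1 \<le> real (N div d)" using d by (simp add: field_simps)
    then show "mangoldt d * (real N / real d - 1) \<le> mangoldt d * real (N div d)"
      by (intro mult_left_mono mangoldt_nonneg)
  qed
  also have "\<dots> = ln (fact N)" by (simp add: ln_fact_eq_sum_mangoldt)
  also have "\<dots> \<le> ln (real N ^ N)"
    using fact_le_power[of N, where 'a=real] assms by (subst ln_le_cancel_iff) auto
  also have "\<dots> = real N * ln (real N)"
    by (simp add: ln_realpow)
  finally have "real N * (\<Sum>d=1..N. mangoldt d / real d) \<le> real N * (ln (real N) + 4)"
    using chebyshev_psi_le[of N] by (simp add: algebra_simps)
  then show ?thesis
    using assms by (simp add: mult_le_cancel_left_pos)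
qed

section \<open>Partial summation\<close>

lemma abel_summation:
  fixes c f :: "nat \<Rightarrow> 'a::comm_ring"
  assumes "1 \<le> a" "a \<le> b"
  shows "(\<Sum>n=a..b. c n * f n) = (\<Sum>m=1..b. c m) * f b - (\<Sum>m=1..a-1. c m) * f a
           + (\<Sum>n=a..<b. (\<Sum>m=1..n. c m) * (f n - f (Suc n)))"
  using assms(2)
proof (induction b rule: dec_induct)
  case base
  have "(\<Sum>m=1..a. c m) = (\<Sum>m=1..a-1. c m) + c a"
    using assms(1) by (cases a) auto
  then show ?case by (simp add: algebra_simps)
next
  case (step n)
  then show ?case by (simp add: algebra_simps)
qed

lemma abs_sum_mult_antimono_le:
  fixes c f :: "nat \<Rightarrow> real"
  assumes antimono: "\<And>n. a \<le> n \<Longrightarrow> f (Suc n) \<le> f n"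
    and nonneg: "\<And>n. a \<le> n \<Longrightarrow> 0 \<le> f n"
    and partial_sums: "\<And>n. 0 \<le> (\<Sum>m=1..n. c m) \<and> (\<Sum>m=1..n. c m) \<le> 1"
    and "1 \<le> a"
  shows "\<bar>\<Sum>n=a..b. c n * f n\<bar> \<le> f a"
proof (cases "a \<le> b")
  case False
  then show ?thesis using nonneg[of a] by simp
next
  case True
  let ?C = "\<lambda>n. \<Sum>m=1..n. c m"
  have "0 \<le> (\<Sum>n=a..<b. ?C n * (f n - f (Suc n)))"
  proof (rule sum_nonneg)
    fix n assume "n \<in> {a..<b}"
    then show "0 \<le> ?C n * (f n - f (Suc n))"
      using partial_sums[of n] antimono[of n] by (intro mult_nonneg_nonneg) auto
  qed
  moreover have "(\<Sum>n=a..<b. ?C n * (f n - f (Suc n))) \<le> (\<Sum>n=a..<b. f n - f (Suc n))"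
    using partial_sums antimono by (intro sum_mono mult_left_le_one_le) auto
  moreover have "(\<Sum>n=a..<b. f n - f (Suc n)) = f a - f b"
    using sum_Suc_diff'[OF True, of "\<lambda>n. - f n"] by simp
  moreover have "0 \<le> ?C b * f b" "?C b * f b \<le> f b"
    using partial_sums[of b] nonneg[of b] True by (auto intro: mult_left_le_one_le)
  moreover have "0 \<le> ?C (a-1) * f a" "?C (a-1) * f a \<le> f a"
    using partial_sums[of "a-1"] nonneg[of a] by (auto intro: mult_left_le_one_le)
  ultimately show ?thesis
    using abel_summation[OF \<open>1 \<le> a\<close> True, of c f] by linarith
qed

section \<open>The character modulo 4\<close>

definition chi4 :: "nat \<Rightarrow> real" where
  "chi4 n = (if n mod 4 = 1 then 1 else if n mod 4 = 3 then -1 else 0)"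

lemma chi4_mult: "chi4 (m * n) = chi4 m * chi4 n"
proof -
  have "m mod 4 \<in> {0, 1, 2, 3}" "n mod 4 \<in> {0, 1, 2, 3}" by auto
  moreover have "(m * n) mod 4 = (m mod 4) * (n mod 4) mod 4" by (simp add: mod_mult_eq)
  ultimately show ?thesis unfolding chi4_def by auto
qed

lemma abs_chi4_le: "\<bar>chi4 n\<bar> \<le> 1"
  unfolding chi4_def by auto

lemma sum_chi4: "(\<Sum>m=1..n. chi4 m) = (if n mod 4 \<in> {1, 2} then 1 else 0)"
  by (induction n) (auto simp: chi4_def mod_Suc)

lemma sum_chi4_bounds: "0 \<le> (\<Sum>m=1..n. chi4 m) \<and> (\<Sum>m=1..n. chi4 m) \<le> 1"
  unfolding sum_chi4 by auto

definition partial_L_chi4 :: "nat \<Rightarrow> real" where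
  "partial_L_chi4 M = (\<Sum>m=1..M. chi4 m / real m)"

lemma abs_partial_L_chi4_diff_le:
  assumes "M \<le> M'"
  shows "\<bar>partial_L_chi4 M' - partial_L_chi4 M\<bar> \<le> 1 / real (M + 1)"
proof -
  have "partial_L_chi4 M' - partial_L_chi4 M = (\<Sum>m=M+1..M'. chi4 m * (1 / real m))"
    unfolding partial_L_chi4_def using sum.ub_add_nat[of 1 M "\<lambda>m. chi4 m / real m" "M' - M"] assms
    by simp
  also have "\<bar>\<dots>\<bar> \<le> 1 / real (M + 1)"
    by (rule abs_sum_mult_antimono_le[OF _ _ sum_chi4_bounds]) (auto simp: frac_le)
  finally show ?thesis .
qed

lemma partial_L_chi4_ge:
  assumes "1 \<le> M"
  shows "1 / 2 \<le> partial_L_chi4 M"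
proof -
  have "partial_L_chi4 1 = 1"
    by (simp add: partial_L_chi4_def chi4_def)
  moreover have "- (partial_L_chi4 M - partial_L_chi4 1) \<le> 1 / real (1 + 1)"
    by (rule abs_le_D2[OF abs_partial_L_chi4_diff_le[OF assms]])
  ultimately show ?thesis by simp
qed

lemma abs_sum_chi4_ln_div_le: "\<bar>\<Sum>n=1..N. chi4 n * (ln (real n) / real n)\<bar> \<le> 1"
proof -
  have "(\<Sum>n=1..N. chi4 n * (ln (real n) / real n)) = (\<Sum>n=3..N. chi4 n * (ln (real n) / real n))"
    by (rule sum.mono_neutral_right) (auto simp: chi4_def)
  also have "\<bar>\<dots>\<bar> \<le> ln (real 3) / real (3::nat)"
  proof (rule abs_sum_mult_antimono_le[OF _ _ sum_chi4_bounds, where f="\<lambda>n. ln (real n) / real n"])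
    fix n :: nat assume "3 \<le> n"
    then have "exp 1 \<le> real n" using exp_le by linarith
    then show "ln (real (Suc n)) / real (Suc n) \<le> ln (real n) / real n"
      by (intro ln_x_over_x_mono) auto
  qed auto
  also have "ln (real 3) / real (3::nat) \<le> 1"
    using ln_le_minus_one[of 3] by simp
  finally show ?thesis .
qed

lemma chi4_ln_div_eq_sum_divisors:
  assumes "n \<noteq> 0"
  shows "chi4 n * (ln (real n) / real n)
           = (\<Sum>d | d dvd n. chi4 d * mangoldt d / real d * (chi4 (n div d) / real (n div d)))"
proof -
  have "chi4 n * (ln (real n) / real n) = (\<Sum>d | d dvd n. mangoldt d) * (chi4 n / real n)"
    using assms by (simp add: mangoldt_sum)
  also have "\<dots> = (\<Sum>d | d dvd n. mangoldt d * (chi4 n / real n))"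
    by (rule sum_distrib_right)
  also have "\<dots> = (\<Sum>d | d dvd n. chi4 d * mangoldt d / real d * (chi4 (n div d) / real (n div d)))"
  proof (rule sum.cong[OF refl])
    fix d assume "d \<in> {d. d dvd n}"
    then obtain e where "n = d * e" by auto
    with assms show "mangoldt d * (chi4 n / real n)
        = chi4 d * mangoldt d / real d * (chi4 (n div d) / real (n div d))"
      by (simp add: chi4_mult)
  qed
  finally show ?thesis .
qed

lemma sum_chi4_ln_div_eq:
  "(\<Sum>n=1..N. chi4 n * (ln (real n) / real n))
     = (\<Sum>d=1..N. chi4 d * mangoldt d / real d * partial_L_chi4 (N div d))"
proof -
  have "(\<Sum>n=1..N. chi4 n * (ln (real n) / real n))
        = (\<Sum>n=1..N. \<Sum>d | d dvd n. chi4 d * mangoldt d / real d * (chi4 (n div d) / real (n div d)))"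
    by (intro sum.cong refl chi4_ln_div_eq_sum_divisors) auto
  also have "\<dots> = (\<Sum>d=1..N. \<Sum>m=1..N div d. chi4 d * mangoldt d / real d * (chi4 m / real m))"
    by (rule sum_divisors_swap)
  also have "\<dots> = (\<Sum>d=1..N. chi4 d * mangoldt d / real d * partial_L_chi4 (N div d))"
    by (simp add: partial_L_chi4_def sum_distrib_left)
  finally show ?thesis .
qed

lemma abs_partial_L_chi4_div_diff_le:
  assumes "1 \<le> d" "d \<le> N"
  shows "\<bar>partial_L_chi4 (N div d) - partial_L_chi4 N\<bar> \<le> real d / real N"
proof -
  have "N mod d < d"
    using assms by simp
  then have "N < (N div d + 1) * d"
    using div_mult_mod_eq[of N d] unfolding distrib_right by linarith
  then have "real N < real (N div d + 1) * real d"
    by (metis of_nat_less_iff of_nat_mult)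
  then have "1 / real (N div d + 1) \<le> real d / real N"
    using assms by (simp add: field_simps)
  then show ?thesis
    using abs_partial_L_chi4_diff_le[of "N div d" N] by (simp add: abs_minus_commute)
qed

lemma abs_sum_chi4_mangoldt_le: "\<bar>\<Sum>d=1..N. chi4 d * mangoldt d / real d\<bar> \<le> 10"
proof (cases "N = 0")
  case True
  then show ?thesis by simp
next
  case False
  define T where "T = (\<Sum>d=1..N. chi4 d * mangoldt d / real d)"
  define E where "E = (\<Sum>d=1..N. chi4 d * mangoldt d / real d * (partial_L_chi4 (N div d) - partial_L_chi4 N))"
  have "(\<Sum>n=1..N. chi4 n * (ln (real n) / real n))
        = (\<Sum>d=1..N. partial_L_chi4 N * (chi4 d * mangoldt d / real d)
            + chi4 d * mangoldt d / real d * (partial_L_chi4 (N div d) - partial_L_chi4 N))"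
    unfolding sum_chi4_ln_div_eq by (intro sum.cong refl) (simp add: right_diff_distrib)
  also have "\<dots> = partial_L_chi4 N * T + E"
    unfolding T_def E_def by (simp only: sum.distrib sum_distrib_left)
  finally have identity: "partial_L_chi4 N * T = (\<Sum>n=1..N. chi4 n * (ln (real n) / real n)) - E"
    by simp
  have "\<bar>E\<bar> \<le> (\<Sum>d=1..N. mangoldt d / real N)"
    unfolding E_def
  proof (rule order_trans[OF sum_abs sum_mono])
    fix d assume d: "d \<in> {1..N}"
    have chi_term: "\<bar>chi4 d * mangoldt d / real d\<bar> \<le> mangoldt d / real d"
      using abs_chi4_le[of d] mangoldt_nonneg[of d]
      by (simp add: abs_mult divide_right_mono mult_left_le_one_le)
    have L_diff: "\<bar>partial_L_chi4 (N div d) - partial_L_chi4 N\<bar> \<le> real d / real N"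
      using d by (intro abs_partial_L_chi4_div_diff_le) auto
    from mult_mono[OF chi_term L_diff]
    have "\<bar>chi4 d * mangoldt d / real d * (partial_L_chi4 (N div d) - partial_L_chi4 N)\<bar>
        \<le> mangoldt d / real d * (real d / real N)"
      using mangoldt_nonneg[of d] by (simp add: abs_mult)
    also have "\<dots> = mangoldt d / real N"
      using d by simp
    finally show "\<bar>chi4 d * mangoldt d / real d * (partial_L_chi4 (N div d) - partial_L_chi4 N)\<bar>
        \<le> mangoldt d / real N" .
  qed
  also have "\<dots> = chebyshev_psi N / real N"
    unfolding chebyshev_psi_def by (simp add: sum_divide_distrib)
  also have "\<dots> \<le> 4"
    using chebyshev_psi_le[of N] False by (simp add: field_simps)
  finally have "\<bar>partial_L_chi4 N * T\<bar> \<le> 5"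
    using abs_sum_chi4_ln_div_le[of N] unfolding identity by linarith
  \<comment> \<open>this is where L(1, chi4) \<noteq> 0 enters\<close>
  moreover have "1 / 2 * \<bar>T\<bar> \<le> \<bar>partial_L_chi4 N * T\<bar>"
  proof -
    have L: "1 / 2 \<le> partial_L_chi4 N"
      using partial_L_chi4_ge False by simp
    then have "1 / 2 * \<bar>T\<bar> \<le> partial_L_chi4 N * \<bar>T\<bar>"
      by (rule mult_right_mono) simp
    also have "\<dots> = \<bar>partial_L_chi4 N * T\<bar>"
      using L by (simp add: abs_mult)
    finally show ?thesis .
  qed
  ultimately show ?thesis unfolding T_def by linarith
qed

section \<open>Primes congruent to 3 modulo 4\<close>

lemma sum_ln_div_primes_3_mod_4_le:
  assumes "1 \<le> n"
  shows "(\<Sum>m=1..n. if prime m \<and> m mod 4 = 3 then ln (real m) / real m else 0) \<le> ln (real n) / 2 + 7"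
proof -
  have "(\<Sum>m=1..n. if prime m \<and> m mod 4 = 3 then ln (real m) / real m else 0)
        \<le> (\<Sum>m=1..n. (mangoldt m / real m - chi4 m * mangoldt m / real m) / 2)"
  proof (rule sum_mono)
    fix m
    have "chi4 m * mangoldt m \<le> 1 * mangoldt m"
      using abs_chi4_le[of m] mangoldt_nonneg[of m] by (intro mult_right_mono) (auto simp: abs_le_iff)
    then have "0 \<le> mangoldt m / real m - chi4 m * mangoldt m / real m"
      by (simp add: diff_divide_distrib[symmetric])
    then show "(if prime m \<and> m mod 4 = 3 then ln (real m) / real m else 0)
        \<le> (mangoldt m / real m - chi4 m * mangoldt m / real m) / 2"
      by (auto simp: chi4_def algebra_simps)
  qed
  also have "\<dots> = ((\<Sum>m=1..n. mangoldt m / real m) - (\<Sum>m=1..n. chi4 m * mangoldt m / real m)) / 2"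
    by (simp only: sum_divide_distrib[symmetric] sum_subtractf)
  also have "\<dots> \<le> ((ln (real n) + 4) + 10) / 2"
    using sum_mangoldt_div_le[OF assms] abs_le_D2[OF abs_sum_chi4_mangoldt_le[of n]] by simp
  finally show ?thesis by simp
qed

lemma two_thirds_le_ln:
  assumes "2 \<le> n"
  shows "2 / 3 \<le> ln (real n)"
proof -
  have "ln 2 \<le> ln (real n)"
    using assms by simp
  then show ?thesis
    using ln2_ge_two_thirds by linarith
qed

lemma inverse_ln_Suc_le:
  assumes "2 \<le> n"
  shows "1 / ln (real (Suc n)) \<le> 1 / ln (real n)"
proof -
  have "0 < ln (real n)" "ln (real n) \<le> ln (real (Suc n))"
    using two_thirds_le_ln[OF assms] assms by auto
  then show ?thesis
    by (intro frac_le) auto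
qed

lemma ln_mult_inverse_ln_diff_le:
  assumes "2 \<le> n"
  shows "ln (real n) * (1 / ln (real n) - 1 / ln (real (Suc n))) \<le> ln (ln (real (Suc n))) - ln (ln (real n))"
proof -
  have "0 < ln (real n)" "0 < ln (real (Suc n))"
    using two_thirds_le_ln[of n] two_thirds_le_ln[of "Suc n"] assms by auto
  then have "ln (real n) * (1 / ln (real n) - 1 / ln (real (Suc n))) = 1 - ln (real n) / ln (real (Suc n))"
    by (simp add: field_simps)
  also have "\<dots> \<le> ln (ln (real (Suc n))) - ln (ln (real n))"
    using ln_le_minus_one[of "ln (real n) / ln (real (Suc n))"] \<open>0 < ln (real n)\<close> \<open>0 < ln (real (Suc n))\<close>
    by (simp add: ln_div)
  finally show ?thesis .
qed

lemma sum_div_ln_le: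
  fixes c :: "nat \<Rightarrow> real" and \<kappa> C :: real
  assumes c_nonneg: "\<And>n. 0 \<le> c n"
    and partial_sums: "\<And>n. 1 \<le> n \<Longrightarrow> (\<Sum>m=1..n. c m) \<le> \<kappa> * ln (real n) + C"
    and "0 \<le> \<kappa>" "0 \<le> C" "2 \<le> a" "a \<le> b"
  shows "(\<Sum>n=a+1..b. c n / ln (real n)) \<le> \<kappa> * (ln (ln (real b)) - ln (ln (real a))) + \<kappa> + 3 / 2 * C"
proof (cases "a = b")
  case True
  then show ?thesis using assms by simp
next
  case False
  then have "a + 1 \<le> b" using assms by simp
  define G where "G n = (\<Sum>m=1..n. c m)" for n
  define f where "f n = 1 / ln (real n)" for n :: nat
  have term_le: "G n * (f n - f (Suc n))
      \<le> \<kappa> * (ln (ln (real (Suc n))) - ln (ln (real n))) + C * (f n - f (Suc n))" if "2 \<le> n" for n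
  proof -
    have "G n * (f n - f (Suc n)) \<le> (\<kappa> * ln (real n) + C) * (f n - f (Suc n))"
      using partial_sums inverse_ln_Suc_le that by (intro mult_right_mono) (auto simp: G_def f_def)
    also have "\<dots> = \<kappa> * (ln (real n) * (f n - f (Suc n))) + C * (f n - f (Suc n))"
      by (simp add: algebra_simps)
    also have "\<kappa> * (ln (real n) * (f n - f (Suc n))) \<le> \<kappa> * (ln (ln (real (Suc n))) - ln (ln (real n)))"
      using \<open>0 \<le> \<kappa>\<close> ln_mult_inverse_ln_diff_le[OF that] by (intro mult_left_mono) (auto simp: f_def)
    finally show ?thesis by simp
  qed
  have telescope: "(\<Sum>n=a+1..<b. \<kappa> * (ln (ln (real (Suc n))) - ln (ln (real n))) + C * (f n - f (Suc n)))
      = \<kappa> * (ln (ln (real b)) - ln (ln (real (a + 1)))) + C * (f (a + 1) - f b)"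
  proof -
    have "(\<Sum>n=a+1..<b. f n - f (Suc n)) = f (a + 1) - f b"
      using sum_Suc_diff'[OF \<open>a + 1 \<le> b\<close>, of "\<lambda>n. - f n"] by simp
    moreover have "(\<Sum>n=a+1..<b. ln (ln (real (Suc n))) - ln (ln (real n)))
        = ln (ln (real b)) - ln (ln (real (a + 1)))"
      by (rule sum_Suc_diff'[OF \<open>a + 1 \<le> b\<close>])
    ultimately show ?thesis
      by (simp only: sum.distrib sum_distrib_left[symmetric])
  qed
  have "(\<Sum>n=a+1..b. c n / ln (real n)) = G b * f b - G a * f (a + 1) + (\<Sum>n=a+1..<b. G n * (f n - f (Suc n)))"
    using abel_summation[OF _ \<open>a + 1 \<le> b\<close>, of c f] by (simp add: G_def f_def)
  also have "\<dots> \<le> (\<kappa> + C * f b) + (\<kappa> * (ln (ln (real b)) - ln (ln (real (a + 1)))) + C * (f (a + 1) - f b))"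
  proof -
    have "G b * f b \<le> (\<kappa> * ln (real b) + C) * f b"
      using partial_sums[of b] two_thirds_le_ln[of b] assms by (intro mult_right_mono) (auto simp: G_def f_def)
    also have "\<dots> = \<kappa> + C * f b"
      using two_thirds_le_ln[of b] assms by (simp add: f_def field_simps)
    finally have "G b * f b \<le> \<kappa> + C * f b" .
    moreover have "0 \<le> G a"
      unfolding G_def using c_nonneg by (rule sum_nonneg)
    then have "0 \<le> G a * f (a + 1)"
      using two_thirds_le_ln[of "a + 1"] assms by (simp add: f_def)
    moreover have "(\<Sum>n=a+1..<b. G n * (f n - f (Suc n)))
        \<le> \<kappa> * (ln (ln (real b)) - ln (ln (real (a + 1)))) + C * (f (a + 1) - f b)"
      unfolding telescope[symmetric] using assms by (intro sum_mono term_le) auto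
    ultimately show ?thesis by linarith
  qed
  also have "\<dots> \<le> \<kappa> * (ln (ln (real b)) - ln (ln (real a))) + \<kappa> + 3 / 2 * C"
  proof -
    have "\<kappa> * ln (ln (real a)) \<le> \<kappa> * ln (ln (real (a + 1)))"
      using two_thirds_le_ln[of a] assms by (intro mult_left_mono) auto
    moreover have "C * f (a + 1) \<le> C * (3 / 2)"
      using two_thirds_le_ln[of "a + 1"] assms by (intro mult_left_mono) (auto simp: f_def field_simps)
    ultimately show ?thesis by (simp add: algebra_simps)
  qed
  finally show ?thesis .
qed

lemma sum_inverse_primes_3_mod_4_le:
  assumes "2 \<le> a" "a \<le> b"
  shows "(\<Sum>n=a+1..b. if prime n \<and> n mod 4 = 3 then 1 / real n else 0)
           \<le> (ln (ln (real b)) - ln (ln (real a))) / 2 + 11"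
proof -
  let ?c = "\<lambda>n. if prime n \<and> n mod 4 = 3 then ln (real n) / real n else 0"
  have "(\<Sum>n=a+1..b. if prime n \<and> n mod 4 = 3 then 1 / real n else 0) = (\<Sum>n=a+1..b. ?c n / ln (real n))"
    using assms by (intro sum.cong refl) (auto simp: prime_gt_1_nat)
  also have "\<dots> \<le> 1 / 2 * (ln (ln (real b)) - ln (ln (real a))) + 1 / 2 + 3 / 2 * 7"
    using sum_ln_div_primes_3_mod_4_le assms by (intro sum_div_ln_le) auto
  finally show ?thesis by simp
qed

section \<open>The sieve weights\<close>

lemma nuL_less:
  assumes "0 < p"
  shows "nuL k a b p < p"
proof -
  have "nuL k a b p \<le> card {1..<p}"
    unfolding nuL_def by (rule card_mono) auto
  then show ?thesis using assms by simp
qed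

lemma nuL_le:
  assumes p: "prime p" and not_dvd: "\<forall>i<k. \<not> int p dvd a i"
  shows "nuL k a b p \<le> k"
proof -
  define roots where "roots i = {n::nat. n < p \<and> int p dvd a i * int n + b i}" for i
  have "prime (int p)" using p by simp
  have roots_le: "card (roots i) \<le> 1" if "i < k" for i
  proof -
    have "n = m" if n: "n \<in> roots i" and m: "m \<in> roots i" for n m
    proof -
      have "int p dvd (a i * int n + b i) - (a i * int m + b i)"
        using n m unfolding roots_def by (intro dvd_diff) auto
      then have "int p dvd a i * (int n - int m)" by (simp add: algebra_simps)
      then have "int p dvd int n - int m"
        using not_dvd \<open>i < k\<close> \<open>prime (int p)\<close> prime_dvd_mult_iff by metis
      then have "int n mod int p = int m mod int p" by (simp add: mod_eq_dvd_iff)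
      then show "n = m" using n m by (simp add: roots_def)
    qed
    moreover have "finite (roots i)" unfolding roots_def by simp
    ultimately show ?thesis by (simp add: card_le_Suc0_iff_eq)
  qed
  have "{n. 1 \<le> n \<and> n < p \<and> int p dvd prodL k a b (int n)} \<subseteq> (\<Union>i<k. roots i)"
    using prime_dvd_prod_iff[OF _ \<open>prime (int p)\<close>, of "{..<k}"]
    by (auto simp: prodL_def roots_def)
  then have "nuL k a b p \<le> card (\<Union>i<k. roots i)"
    unfolding nuL_def by (intro card_mono) (auto simp: roots_def)
  also have "\<dots> \<le> (\<Sum>i<k. card (roots i))"
    by (rule card_UN_le) simp
  also have "\<dots> \<le> (\<Sum>i<k. 1)"
    using roots_le by (intro sum_mono) auto
  finally show ?thesis by simp
qed

lemma finite_nat_real_less: "finite {n::nat. real n < c}"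
  by (rule finite_subset[of _ "{..<nat \<lceil>c\<rceil>}"]) (auto, linarith)

lemma sum_prod_supersets:
  fixes g :: "'a \<Rightarrow> 'b::comm_semiring_1"
  assumes "finite S" "D \<subseteq> S"
  shows "(\<Sum>B\<in>{B. B \<subseteq> S \<and> D \<subseteq> B}. \<Prod>p\<in>B. g p) = (\<Prod>p\<in>D. g p) * (\<Prod>p\<in>S-D. 1 + g p)"
proof -
  have "(\<Sum>B\<in>{B. B \<subseteq> S \<and> D \<subseteq> B}. \<Prod>p\<in>B. g p) = (\<Sum>B'\<in>Pow (S-D). \<Prod>p\<in>D \<union> B'. g p)"
    using assms(2)
    by (intro sum.reindex_bij_witness[where j="\<lambda>B. B - D" and i="\<lambda>B'. D \<union> B'"])
       (auto simp: Un_absorb1)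
  also have "\<dots> = (\<Sum>B'\<in>Pow (S-D). (\<Prod>p\<in>D. g p) * (\<Prod>p\<in>B'. g p))"
    using assms by (intro sum.cong refl prod.union_disjoint) (auto intro: finite_subset)
  also have "\<dots> = (\<Prod>p\<in>D. g p) * (\<Prod>p\<in>S-D. g p + 1)"
    using prod_add[of "S-D" g "\<lambda>_. 1"] assms by (simp add: sum_distrib_left)
  finally show ?thesis by (simp add: add.commute)
qed

lemma prod_prime_factors_squarefree:
  assumes "squarefree (r::nat)" "0 < r"
  shows "\<Prod>(prime_factors r) = r"
proof -
  have "\<And>p. p \<in> prime_factors r \<Longrightarrow> multiplicity p r = 1"
    using assms squarefree_factorial_semiring'[of r] by auto
  then show ?thesis
    using prod_prime_factors[of r] assms by simp
qed

definition sieve_primes :: "real \<Rightarrow> nat \<Rightarrow> nat set" where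
  "sieve_primes X p0 = {p. prime p \<and> p mod 4 = 3 \<and> coprime p (Wprod X p0 * p0) \<and> real p < X powr (1/10)}"

lemma finite_sieve_primes: "finite (sieve_primes X p0)"
  by (rule finite_subset[OF _ finite_nat_real_less[of "X powr (1/10)"]]) (auto simp: sieve_primes_def)

lemma prime_factors_subset_sieve_primes:
  assumes "r \<in> P3" "coprime r (Wprod X p0 * p0)" "real r < X powr (1/10)"
  shows "prime_factors r \<subseteq> sieve_primes X p0"
proof
  fix p assume p: "p \<in> prime_factors r"
  then have "p dvd r" by auto
  have "0 < r" using assms(1) by (simp add: P3_def)
  with \<open>p dvd r\<close> have "p \<le> r" by (rule dvd_imp_le)
  moreover have "coprime p (Wprod X p0 * p0)"
    using \<open>p dvd r\<close> dvd_refl assms(2) by (rule coprime_divisors)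
  moreover have "p mod 4 = 3"
    using assms(1) p by (simp add: P3_def)
  ultimately show "p \<in> sieve_primes X p0"
    using p assms(3) by (auto simp: sieve_primes_def)
qed

lemma sum_yr_le_sum_supersets:
  fixes g :: "nat \<Rightarrow> real" and X :: real and p0 :: nat
  assumes g_nonneg: "\<And>p. 0 \<le> g p"
  shows "(\<Sum>r\<in>{r. 0 < r \<and> d dvd r \<and> real r < X powr (1/10)}. yr X p0 r * (\<Prod>p\<in>prime_factors r. g p))
           \<le> (\<Sum>B\<in>{B. B \<subseteq> sieve_primes X p0 \<and> prime_factors d \<subseteq> B}. \<Prod>p\<in>B. g p)"
proof -
  define S where "S = sieve_primes X p0"
  define M where "M = {r. 0 < r \<and> d dvd r \<and> real r < X powr (1/10)}"
  define R where "R = {r \<in> M. r \<in> P3 \<and> squarefree r \<and> coprime r (Wprod X p0 * p0)}"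
  have "finite M"
    by (rule finite_subset[OF _ finite_nat_real_less[of "X powr (1/10)"]]) (auto simp: M_def)
  have "finite S"
    unfolding S_def by (rule finite_sieve_primes)
  have "(\<Sum>r\<in>M. yr X p0 r * (\<Prod>p\<in>prime_factors r. g p)) = (\<Sum>r\<in>R. \<Prod>p\<in>prime_factors r. g p)"
  proof (rule sum.mono_neutral_cong_right[OF \<open>finite M\<close>])
    show "R \<subseteq> M" by (auto simp: R_def)
    show "\<forall>r\<in>M - R. yr X p0 r * (\<Prod>p\<in>prime_factors r. g p) = 0"
      by (auto simp: R_def yr_def)
    show "yr X p0 r * (\<Prod>p\<in>prime_factors r. g p) = (\<Prod>p\<in>prime_factors r. g p)" if "r \<in> R" for r
      using that by (auto simp: R_def M_def yr_def)
  qed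
  also have "\<dots> = (\<Sum>B\<in>prime_factors ` R. \<Prod>p\<in>B. g p)"
  proof -
    have "inj_on prime_factors R"
    proof (rule inj_onI)
      fix r s assume "r \<in> R" "s \<in> R" and same_factors: "prime_factors r = prime_factors s"
      then have "squarefree r" "0 < r" "squarefree s" "0 < s"
        by (auto simp: R_def M_def)
      then show "r = s"
        using same_factors by (metis prod_prime_factors_squarefree)
    qed
    then show ?thesis by (simp add: sum.reindex)
  qed
  also have "\<dots> \<le> (\<Sum>B\<in>{B. B \<subseteq> S \<and> prime_factors d \<subseteq> B}. \<Prod>p\<in>B. g p)"
  proof (rule sum_mono2)
    show "finite {B. B \<subseteq> S \<and> prime_factors d \<subseteq> B}"
      by (rule finite_subset[of _ "Pow S"]) (use \<open>finite S\<close> in auto)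
    show "prime_factors ` R \<subseteq> {B. B \<subseteq> S \<and> prime_factors d \<subseteq> B}"
    proof safe
      fix r p assume "r \<in> R" "p \<in> prime_factors r"
      then show "p \<in> S"
        unfolding S_def using prime_factors_subset_sieve_primes by (auto simp: R_def M_def)
    next
      fix r p assume "r \<in> R" "p \<in> prime_factors d"
      then have "r \<noteq> 0" "d dvd r" by (auto simp: R_def M_def)
      with \<open>p \<in> prime_factors d\<close> show "p \<in> prime_factors r"
        using dvd_prime_factors by blast
    qed
    show "0 \<le> (\<Prod>p\<in>B. g p)" for B
      using g_nonneg by (intro prod_nonneg) auto
  qed
  finally show ?thesis unfolding M_def S_def .
qed

definition sieve_density :: "nat \<Rightarrow> (nat \<Rightarrow> int) \<Rightarrow> (nat \<Rightarrow> int) \<Rightarrow> nat \<Rightarrow> real" where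
  "sieve_density k a b p = real (nuL k a b p) / (real p - real (nuL k a b p))"

lemma sieve_density_nonneg: "0 \<le> sieve_density k a b p"
  using nuL_less[of p k a b] by (cases "p = 0") (auto simp: sieve_density_def nuL_def)

lemma one_plus_sieve_density:
  assumes "0 < p"
  shows "1 + sieve_density k a b p = real p / (real p - real (nuL k a b p))"
  using nuL_less[OF assms, of k a b] by (simp add: sieve_density_def field_simps)

lemma prod_mult_sum_supersets_le:
  fixes g h :: "'a \<Rightarrow> real"
  assumes "finite S" and g_nonneg: "\<And>p. 0 \<le> g p"
    and h: "\<And>p. p \<in> D \<Longrightarrow> 0 \<le> h p \<and> h p * g p \<le> 1 + g p"
  shows "(\<Prod>p\<in>D. h p) * (\<Sum>B\<in>{B. B \<subseteq> S \<and> D \<subseteq> B}. \<Prod>p\<in>B. g p) \<le> (\<Prod>p\<in>S. 1 + g p)"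
proof (cases "D \<subseteq> S")
  case True
  have "(\<Prod>p\<in>D. h p) * (\<Sum>B\<in>{B. B \<subseteq> S \<and> D \<subseteq> B}. \<Prod>p\<in>B. g p)
        = (\<Prod>p\<in>D. h p * g p) * (\<Prod>p\<in>S-D. 1 + g p)"
    unfolding sum_prod_supersets[OF \<open>finite S\<close> True] by (simp only: prod.distrib mult.assoc)
  also have "\<dots> \<le> (\<Prod>p\<in>D. 1 + g p) * (\<Prod>p\<in>S-D. 1 + g p)"
    using h g_nonneg by (intro mult_right_mono prod_mono prod_nonneg) (auto intro: add_nonneg_nonneg)
  also have "\<dots> = (\<Prod>p\<in>S. 1 + g p)"
    using prod.subset_diff[OF True \<open>finite S\<close>, of "\<lambda>p. 1 + g p"] by (simp add: mult.commute)
  finally show ?thesis .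
next
  case False
  then have no_supersets: "{B. B \<subseteq> S \<and> D \<subseteq> B} = {}" by auto
  have "0 \<le> (\<Prod>p\<in>S. 1 + g p)"
    using g_nonneg by (intro prod_nonneg) (simp add: add_nonneg_nonneg)
  then show ?thesis unfolding no_supersets by simp
qed

lemma abs_lambdaL_le_sum_supersets:
  "\<bar>lambdaL X p0 k a b d\<bar> \<le> (\<Prod>p\<in>prime_factors d. real p / real (nuL k a b p))
      * (\<Sum>B\<in>{B. B \<subseteq> sieve_primes X p0 \<and> prime_factors d \<subseteq> B}. \<Prod>p\<in>B. sieve_density k a b p)"
    (is "_ \<le> ?P * ?supersets")
proof -
  have "0 \<le> ?P"
    by (intro prod_nonneg) auto
  show ?thesis
  proof (cases "coprime d (p0 * Wprod X p0)")
    case True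
    let ?sum = "\<Sum>r\<in>{r. 0 < r \<and> d dvd r \<and> real r < X powr (1/10)}.
                  yr X p0 r * (\<Prod>p\<in>prime_factors r. sieve_density k a b p)"
    have "0 \<le> ?sum"
      using sieve_density_nonneg by (intro sum_nonneg mult_nonneg_nonneg prod_nonneg) (auto simp: yr_def)
    have "\<bar>lambdaL X p0 k a b d\<bar> = \<bar>real_of_int (moeb d)\<bar> * (?P * ?sum)"
      using True \<open>0 \<le> ?sum\<close> \<open>0 \<le> ?P\<close> by (simp add: lambdaL_def sieve_density_def abs_mult)
    also have "\<dots> \<le> ?P * ?sum"
      using \<open>0 \<le> ?sum\<close> \<open>0 \<le> ?P\<close> by (intro mult_left_le_one_le) (auto simp: moeb_def)
    also have "\<dots> \<le> ?P * ?supersets"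
      using \<open>0 \<le> ?P\<close> sieve_density_nonneg by (intro mult_left_mono sum_yr_le_sum_supersets)
    finally show ?thesis .
  next
    case False
    then show ?thesis
      using sieve_density_nonneg \<open>0 \<le> ?P\<close>
      by (auto simp: lambdaL_def intro!: mult_nonneg_nonneg sum_nonneg prod_nonneg)
  qed
qed

lemma abs_lambdaL_le:
  "\<bar>lambdaL X p0 k a b d\<bar> \<le> (\<Prod>p\<in>sieve_primes X p0. real p / (real p - real (nuL k a b p)))"
proof -
  have "\<bar>lambdaL X p0 k a b d\<bar> \<le> (\<Prod>p\<in>sieve_primes X p0. 1 + sieve_density k a b p)"
  proof (rule order_trans[OF abs_lambdaL_le_sum_supersets prod_mult_sum_supersets_le])
    fix p assume "p \<in> prime_factors d"
    then have "0 < p" by (auto intro: prime_gt_0_nat)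
    show "0 \<le> real p / real (nuL k a b p) \<and>
        real p / real (nuL k a b p) * sieve_density k a b p \<le> 1 + sieve_density k a b p"
    proof (cases "nuL k a b p = 0")
      case True
      then show ?thesis using sieve_density_nonneg[of k a b p] by simp
    next
      case False
      then have "real p / real (nuL k a b p) * sieve_density k a b p = real p / (real p - real (nuL k a b p))"
        by (simp add: sieve_density_def)
      then show ?thesis using one_plus_sieve_density[OF \<open>0 < p\<close>] by simp
    qed
  qed (use finite_sieve_primes sieve_density_nonneg in auto)
  also have "\<dots> = (\<Prod>p\<in>sieve_primes X p0. real p / (real p - real (nuL k a b p)))"
    using one_plus_sieve_density by (intro prod.cong refl) (auto simp: sieve_primes_def prime_gt_0_nat)
  finally show ?thesis .
qed

section \<open>Size of the sieve weights\<close>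

lemma div_diff_le_exp:
  fixes p k :: real
  assumes "0 < p" "0 \<le> k" "2 * k \<le> p"
  shows "p / (p - k) \<le> exp (k / p + 2 * k\<^sup>2 / p\<^sup>2)"
proof -
  have "0 < p - k" using assms by simp
  have "k / p + 2 * k\<^sup>2 / p\<^sup>2 - k / (p - k) = k\<^sup>2 * (p - 2 * k) / (p\<^sup>2 * (p - k))"
    using \<open>0 < p - k\<close> \<open>0 < p\<close> by (simp add: field_simps power2_eq_square)
  also have "\<dots> \<ge> 0"
    using assms \<open>0 < p - k\<close> by (intro divide_nonneg_nonneg mult_nonneg_nonneg) auto
  finally have "k / (p - k) \<le> k / p + 2 * k\<^sup>2 / p\<^sup>2" by simp
  have "p / (p - k) = 1 + k / (p - k)"
    using \<open>0 < p - k\<close> by (simp add: field_simps)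
  also have "\<dots> \<le> exp (k / (p - k))"
    by (rule exp_ge_add_one_self)
  also have "\<dots> \<le> exp (k / p + 2 * k\<^sup>2 / p\<^sup>2)"
    using \<open>k / (p - k) \<le> k / p + 2 * k\<^sup>2 / p\<^sup>2\<close> by simp
  finally show ?thesis .
qed

lemma prod_div_diff_le_exp_sum:
  fixes \<nu> :: "nat \<Rightarrow> nat"
  assumes "finite S" and small: "\<And>p. p \<in> S \<Longrightarrow> \<nu> p \<le> k \<and> 2 * real k < real p"
  shows "(\<Prod>p\<in>S. real p / (real p - real (\<nu> p)))
           \<le> exp (real k * (\<Sum>p\<in>S. 1 / real p) + 2 * (real k)\<^sup>2 * (\<Sum>p\<in>S. 1 / (real p)\<^sup>2))"
proof -
  have "(\<Prod>p\<in>S. real p / (real p - real (\<nu> p))) \<le> (\<Prod>p\<in>S. exp (real k / real p + 2 * (real k)\<^sup>2 / (real p)\<^sup>2))"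
  proof (rule prod_mono)
    fix p assume "p \<in> S"
    then have "\<nu> p \<le> k" "2 * real k < real p" using small by auto
    then have "real p / (real p - real (\<nu> p)) \<le> real p / (real p - real k)"
      by (intro divide_left_mono) auto
    also have "\<dots> \<le> exp (real k / real p + 2 * (real k)\<^sup>2 / (real p)\<^sup>2)"
      using \<open>2 * real k < real p\<close> by (intro div_diff_le_exp) auto
    finally show "0 \<le> real p / (real p - real (\<nu> p)) \<and>
        real p / (real p - real (\<nu> p)) \<le> exp (real k / real p + 2 * (real k)\<^sup>2 / (real p)\<^sup>2)"
      using \<open>\<nu> p \<le> k\<close> \<open>2 * real k < real p\<close> by simp
  qed
  also have "\<dots> = exp (\<Sum>p\<in>S. real k / real p + 2 * (real k)\<^sup>2 / (real p)\<^sup>2)"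
    using \<open>finite S\<close> by (simp add: exp_sum)
  also have "(\<Sum>p\<in>S. real k / real p + 2 * (real k)\<^sup>2 / (real p)\<^sup>2)
      = real k * (\<Sum>p\<in>S. 1 / real p) + 2 * (real k)\<^sup>2 * (\<Sum>p\<in>S. 1 / (real p)\<^sup>2)"
    by (simp add: sum.distrib sum_distrib_left)
  finally show ?thesis .
qed

lemma sum_inverse_squares_le:
  assumes "1 \<le> A"
  shows "(\<Sum>n=A+1..M. 1 / (real n)\<^sup>2) \<le> 1 / real A"
proof (cases "A \<le> M")
  case True
  have "(\<Sum>n=A+1..M. 1 / (real n)\<^sup>2) \<le> 1 / real A - 1 / real M"
    using True
  proof (induction M rule: dec_induct)
    case (step m)
    have "1 / (real (Suc m))\<^sup>2 \<le> 1 / (real m * real (Suc m))"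
      using step.hyps assms by (intro divide_left_mono) (auto simp: power2_eq_square)
    also have "\<dots> = 1 / real m - 1 / real (Suc m)"
      using step.hyps assms by (simp add: field_simps)
    finally show ?case using step.IH step.hyps by simp
  qed simp
  moreover have "0 \<le> 1 / real M"
    by simp
  ultimately show ?thesis by linarith
qed simp

lemma prime_dvd_Wprod:
  assumes "prime p" "p mod 4 = 3" "p \<noteq> p0" "real p \<le> 2 * ln X powr (1/3)"
  shows "p dvd Wprod X p0"
proof -
  have "finite {p::nat. real p < 2 * ln X powr (1/3) + 1}"
    by (rule finite_nat_real_less)
  then have "finite {p::nat. prime p \<and> real p \<le> 2 * ln X powr (1/3) \<and> p mod 4 = 3 \<and> p \<noteq> p0}"
    by (rule finite_subset[rotated]) auto
  then show ?thesis
    unfolding Wprod_def using assms by (intro dvd_prodI[where f=id, simplified]) auto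
qed

lemma sieve_primes_gt:
  assumes "p \<in> sieve_primes X p0"
  shows "2 * ln X powr (1/3) < real p"
proof (rule ccontr)
  assume small: "\<not> ?thesis"
  from assms have "prime p" "p mod 4 = 3" and coprime: "coprime p (Wprod X p0 * p0)"
    by (auto simp: sieve_primes_def)
  moreover have "p \<noteq> p0"
    using coprime \<open>prime p\<close> by auto
  ultimately have "p dvd Wprod X p0"
    using small by (intro prime_dvd_Wprod) auto
  then show False
    using coprime \<open>prime p\<close> by auto
qed

lemma ln_powr_bounds:
  fixes L :: real
  assumes "exp (exp 26) \<le> L"
  shows "2 \<le> L powr (1/3)" "2 * L powr (1/5) \<le> L powr (1/3)"
    and "L powr (1/3) \<le> y \<Longrightarrow> 24 \<le> ln (ln y)"
proof -
  have "0 < L"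
    using assms exp_gt_zero[of "exp 26"] by linarith
  have "exp 26 \<le> ln L"
    using assms \<open>0 < L\<close> by (simp add: ln_ge_iff)
  moreover have "(26::real) \<le> exp 26"
    using exp_ge_add_one_self[of 26] by linarith
  moreover have "3 * exp 24 \<le> exp 2 * exp (24::real)"
    using exp_ge_add_one_self[of 2] by (intro mult_right_mono) auto
  moreover have "exp 2 * exp 24 = exp (26::real)"
    by (simp flip: exp_add)
  ultimately have "15 / 2 \<le> ln L" "3 * exp 24 \<le> ln L" by linarith+
  have "2 \<le> exp (1::real)"
    using exp_ge_add_one_self[of 1] by simp
  also have "exp 1 \<le> exp (2/15 * ln L)"
    using \<open>15 / 2 \<le> ln L\<close> by simp
  also have "\<dots> = L powr (2/15)"
    using \<open>0 < L\<close> by (simp add: powr_def)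
  finally have "2 \<le> L powr (2/15)" .
  then have "L powr (1/5) * 2 \<le> L powr (1/5) * L powr (2/15)"
    by (intro mult_left_mono) auto
  also have "\<dots> = L powr (1/3)"
    by (simp flip: powr_add)
  finally show "2 * L powr (1/5) \<le> L powr (1/3)" by simp
  moreover have "1 \<le> L"
    using exp_ge_add_one_self[of "exp 26"] exp_gt_zero[of 26] assms by linarith
  then have "1 \<le> L powr (1/5)"
    by (intro ge_one_powr_ge_zero) auto
  ultimately show "2 \<le> L powr (1/3)" by linarith
  assume "L powr (1/3) \<le> y"
  have "exp 24 \<le> ln L / 3"
    using \<open>3 * exp 24 \<le> ln L\<close> by simp
  also have "ln L / 3 = ln (L powr (1/3))"
    using \<open>0 < L\<close> by simp
  also have "\<dots> \<le> ln y"
    using \<open>L powr (1/3) \<le> y\<close> \<open>2 \<le> L powr (1/3)\<close> by (intro ln_mono) auto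
  finally have "exp 24 \<le> ln y" .
  moreover from this have "0 < ln y"
    using exp_gt_zero[of 24] by linarith
  ultimately show "24 \<le> ln (ln y)"
    by (simp add: ln_ge_iff)
qed

(* The saving ln (ln A) >= 24 absorbs the constant 11 of the prime sum and the
   contribution k of the squares. *)
lemma sieve_exponent_le:
  fixes S :: "nat set" and A B k :: nat
  assumes "2 \<le> A" "A \<le> B" "2 * real k \<le> real A" "ln (ln (real B)) \<le> l" "24 \<le> ln (ln (real A))"
    and S: "\<And>p. p \<in> S \<Longrightarrow> prime p \<and> p mod 4 = 3 \<and> A < p \<and> p \<le> B"
  shows "real k * (\<Sum>p\<in>S. 1 / real p) + 2 * (real k)\<^sup>2 * (\<Sum>p\<in>S. 1 / (real p)\<^sup>2) \<le> real k / 2 * l"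
proof -
  have "S \<subseteq> {A+1..B}"
    using S by (auto simp: Suc_le_eq)
  have "(\<Sum>p\<in>S. 1 / real p) = (\<Sum>p\<in>S. if prime p \<and> p mod 4 = 3 then 1 / real p else 0)"
    using S by (intro sum.cong) auto
  also have "\<dots> \<le> (\<Sum>n=A+1..B. if prime n \<and> n mod 4 = 3 then 1 / real n else 0)"
    using \<open>S \<subseteq> {A+1..B}\<close> by (intro sum_mono2) auto
  also have "\<dots> \<le> (ln (ln (real B)) - ln (ln (real A))) / 2 + 11"
    using assms by (intro sum_inverse_primes_3_mod_4_le) auto
  also have "\<dots> \<le> (l - 24) / 2 + 11"
    using assms by simp
  finally have "real k * (\<Sum>p\<in>S. 1 / real p) \<le> real k * ((l - 24) / 2 + 11)"
    by (rule mult_left_mono) simp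
  moreover have "2 * (real k)\<^sup>2 * (\<Sum>p\<in>S. 1 / (real p)\<^sup>2) \<le> real k"
  proof -
    have "(\<Sum>p\<in>S. 1 / (real p)\<^sup>2) \<le> (\<Sum>n=A+1..B. 1 / (real n)\<^sup>2)"
      using \<open>S \<subseteq> {A+1..B}\<close> by (intro sum_mono2) auto
    also have "\<dots> \<le> 1 / real A"
      using assms by (intro sum_inverse_squares_le) auto
    finally have "2 * (real k)\<^sup>2 * (\<Sum>p\<in>S. 1 / (real p)\<^sup>2) \<le> 2 * (real k)\<^sup>2 * (1 / real A)"
      by (rule mult_left_mono) simp
    also have "\<dots> = real k * (2 * real k / real A)"
      by (simp add: power2_eq_square)
    also have "\<dots> \<le> real k"
      using assms by (intro mult_left_le) (auto simp: field_simps)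
    finally show ?thesis .
  qed
  moreover have "real k * ((l - 24) / 2 + 11) + real k = real k / 2 * l"
    by (simp add: field_simps)
  ultimately show ?thesis by linarith
qed

lemma nuL_le_of_sieve_primes:
  assumes a: "\<forall>i<k. 0 < a i \<and> real_of_int (a i) \<le> ln X powr (1/3)"
    and p: "p \<in> sieve_primes X p0"
  shows "nuL k a b p \<le> k"
proof (rule nuL_le)
  show "prime p" using p by (simp add: sieve_primes_def)
  show "\<forall>i<k. \<not> int p dvd a i"
  proof (intro allI impI notI)
    fix i assume "i < k" "int p dvd a i"
    then have "real p \<le> ln X powr (1/3)"
      using a zdvd_imp_le[of "int p" "a i"] by force
    then show False
      using sieve_primes_gt[OF p] powr_ge_zero[of "ln X" "1/3"] by linarith
  qed
qed

lemma sieve_primes_in_interval: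
  assumes "p \<in> sieve_primes X p0"
  shows "nat \<lfloor>2 * ln X powr (1/3)\<rfloor> < p" "p \<le> nat \<lfloor>X powr (1/10)\<rfloor>"
proof -
  have "2 * ln X powr (1/3) < real p" "real p < X powr (1/10)"
    using assms sieve_primes_gt by (auto simp: sieve_primes_def)
  then show "nat \<lfloor>2 * ln X powr (1/3)\<rfloor> < p" "p \<le> nat \<lfloor>X powr (1/10)\<rfloor>"
    by (auto simp: nat_less_iff floor_less_iff le_nat_iff le_floor_iff)
qed

lemma ln_ln_le_of_le_powr:
  assumes "2 \<le> B" "real B \<le> X powr (1/10)" "1 \<le> ln X"
  shows "ln (ln (real B)) \<le> ln (ln X)"
proof -
  have "ln (real B) \<le> ln (X powr (1/10))"
    using assms by (intro ln_mono) auto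
  also have "\<dots> \<le> ln X"
    using assms(3) by simp
  finally have "ln (real B) \<le> ln X" .
  moreover have "0 < ln (real B)"
    using assms(1) by simp
  ultimately show ?thesis
    by (rule ln_mono)
qed

lemma abs_lambdaL_le_ln_powr:
  fixes X :: real and k p0 :: nat and a b :: "nat \<Rightarrow> int"
  assumes X: "exp (exp (exp 26)) \<le> X"
    and k: "real k \<le> ln X powr (1/5)"
    and a: "\<forall>i<k. 0 < a i \<and> real_of_int (a i) \<le> ln X powr (1/3)"
  shows "\<bar>lambdaL X p0 k a b d\<bar> \<le> ln X powr (real k / 2)"
proof -
  define L where "L = ln X"
  define S where "S = sieve_primes X p0"
  define A where "A = nat \<lfloor>2 * L powr (1/3)\<rfloor>"
  define B where "B = nat \<lfloor>X powr (1/10)\<rfloor>"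
  have "0 < X"
    using X exp_gt_zero[of "exp (exp 26)"] by linarith
  then have L: "exp (exp 26) \<le> L"
    using X by (simp add: L_def ln_ge_iff)
  note L_bounds = ln_powr_bounds[OF L]
  have "1 \<le> L"
    using L exp_ge_add_one_self[of "exp 26"] exp_gt_zero[of 26] by linarith
  have "real A = of_int \<lfloor>2 * L powr (1/3)\<rfloor>"
    by (simp add: A_def)
  then have "L powr (1/3) \<le> real A"
    using floor_correct[of "2 * L powr (1/3)"] L_bounds(1) by linarith
  then have "2 \<le> A" "2 * real k \<le> real A"
    using L_bounds(1,2) k by (auto simp: L_def)
  have S: "prime p \<and> p mod 4 = 3 \<and> A < p \<and> p \<le> B \<and> nuL k a b p \<le> k \<and> 2 * real k < real p"
    if "p \<in> S" for p
    using that sieve_primes_in_interval[of p X p0] nuL_le_of_sieve_primes[OF a, of p p0 b]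
      \<open>2 * real k \<le> real A\<close> by (auto simp: S_def A_def B_def L_def sieve_primes_def)
  have "\<bar>lambdaL X p0 k a b d\<bar> \<le> (\<Prod>p\<in>S. real p / (real p - real (nuL k a b p)))"
    unfolding S_def by (rule abs_lambdaL_le)
  also have "\<dots> \<le> exp (real k * (\<Sum>p\<in>S. 1 / real p) + 2 * (real k)\<^sup>2 * (\<Sum>p\<in>S. 1 / (real p)\<^sup>2))"
    using S unfolding S_def by (intro prod_div_diff_le_exp_sum finite_sieve_primes) (auto simp flip: S_def)
  also have "\<dots> \<le> exp (real k / 2 * ln L)"
  proof (cases "S = {}")
    case True
    then show ?thesis using \<open>1 \<le> L\<close> by simp
  next
    case False
    then have "A \<le> B" using S by fastforce
    moreover have "ln (ln (real B)) \<le> ln L"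
      using \<open>2 \<le> A\<close> \<open>A \<le> B\<close> \<open>0 < X\<close> \<open>1 \<le> L\<close> unfolding L_def
      by (intro ln_ln_le_of_le_powr) (auto simp: B_def)
    moreover have "24 \<le> ln (ln (real A))"
      using \<open>L powr (1/3) \<le> real A\<close> by (rule L_bounds(3))
    ultimately show ?thesis
      using sieve_exponent_le[OF \<open>2 \<le> A\<close> _ \<open>2 * real k \<le> real A\<close>] S by simp
  qed
  also have "\<dots> = ln X powr (real k / 2)"
    using \<open>1 \<le> L\<close> by (simp add: L_def powr_def)
  finally show ?thesis .
qed

theorem lemma9:
  "\<exists>C::real. \<exists>X0::real. \<forall>X\<ge>X0. \<forall>(k::nat) (p0::nat) (a::nat \<Rightarrow> int) (b::nat \<Rightarrow> int)
      (c0::real) (Ceps::real \<Rightarrow> real).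
     real k \<le> ln X powr (1/5) \<longrightarrow>
     prime p0 \<longrightarrow> ln (ln X) / 2 \<le> real p0 \<longrightarrow> real p0 \<le> X \<longrightarrow>
     c0 > 0 \<longrightarrow>
     (\<forall>\<epsilon>>0. (\<Sum>q\<in>{q::nat. 0 < q \<and> real q < X powr (1/2 - \<epsilon>) \<and> coprime q p0}.
            (SUP (a', x') \<in> {(a'::nat, x'::real). coprime a' q \<and> x' \<le> X}.
               \<bar>real (prime_pi_ap x' q a') - real (prime_pi x') / real (totient q)\<bar>))
          \<le> Ceps \<epsilon> * X * exp (- c0 * sqrt (ln X))) \<longrightarrow>
     (\<forall>i<k. \<forall>j<k. i \<noteq> j \<longrightarrow> (a i, b i) \<noteq> (a j, b j)) \<longrightarrow>
     (\<forall>i<k. 0 < a i \<and> real_of_int (a i) \<le> ln X powr (1/3) \<and> coprime (2 * int p0) (a i)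
            \<and> 0 < b i \<and> real_of_int (b i) < X) \<longrightarrow>
     (\<forall>p::nat. prime p \<longrightarrow> p mod 4 = 3 \<longrightarrow> (\<exists>n::int. \<not> int p dvd prodL k a b n)) \<longrightarrow>
     (\<forall>d::nat. \<bar>lambdaL X p0 k a b d\<bar> \<le> C * ln X powr (real k / 2))"
proof (rule exI[of _ 1], rule exI[of _ "exp (exp (exp 26))"], intro allI impI, goal_cases)
  case (1 X k p0 a b c0 Ceps d)
  from 1(9) have "\<forall>i<k. 0 < a i \<and> real_of_int (a i) \<le> ln X powr (1/3)"
    by blast
  from abs_lambdaL_le_ln_powr[OF 1(1,2) this] show ?case
    by simp
qed

end
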